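(* Let $S$ be a monotonically decreasing indexical set of agents. Let $P$ be a decision protocol that implements the knowledge-based program $\mathbf{P}(\Phi)$ with respect to an information exchange $\mathcal{E}$ and failure model $\mathcal{F}$, where $\Phi_{i,v}=B^S_i\,CB_S\,\exists v$. Then SBA($S$) is valid in $\mathcal{I}_{P,\mathcal{E},\mathcal{F}}$.
   Context: Agents $\mathrm{Agt}=\{1,\dots,n\}$; $V$ is a totally ordered set of decision values; actions $A_i=\{\mathtt{noop}\}\cup\{\mathtt{decide}_i(v):v\in V\}$. An information exchange $\mathcal{E}$ gives each agent $i$ a tuple $(L_i,I_i,M_i,\mu_i,\delta_i)$: local states $L_i$ of form $\langle\mathit{init}_i,\mathit{time}_i,\dots\rangle$ ($\mathit{init}_i\in V$ the initial preference), initial states $I_i$, messages $M_i\ni\bot$, $\mu_i:L_i\times A_i\to(\mathrm{Agt}\to M_i)$, $\delta_i:L_i\times A_i\times\prod_jM_j\to L_i$ (preserving $\mathit{init}_i$, incrementing $\mathit{time}_i$). A decision protocol is $P=(P_i:L_i\to A_i)_i$. A failure model $\mathcal{F}=(L^*_e,I_e,\delta_e,\mathit{Adv})$ has environment states, nonempty initial ones, update $\delta_e:L^*_e\times\prod_iA_i\to L^*_e$, and a nonempty set of adversaries $(\Delta^t,\Delta^r,\Delta^s)$ with $\Delta^t,\Delta^r:\mathbb{N}\times\mathrm{Agt}\times\mathrm{Agt}\times\bigcup_iM_i\to\bigcup_iM_i$, $\Delta^s_i:\mathbb{N}\times L_i\to L_i$ (not changing $\mathit{time}_i$). Runs $r$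 of $\mathcal{I}_{P,\mathcal{E},\mathcal{F}}$: $r(0)=((s_e,\alpha),s_1,\dots,s_n)$ with $s_e\in I_e,\alpha\in\mathit{Adv},s_i\in I_i$; from $r(k)=((s_e,\alpha),s_1,\dots,s_n)$, $r(k+1)=((\delta_e(s_e,(a_1,\dots,a_n)),\alpha),s'_1,\dots,s'_n)$ where $a_i=P_i(s_i)$ (action of $i$ at time $k$), $m_{i,j}=\mu_i(s_i,a_i)(j)$, $m'_{i,j}=\Delta^r(k,i,j,\Delta^t(k,i,j,m_{i,j}))$, $s^*_j=\delta_j(s_j,a_j,(m'_{1,j},\dots,m'_{n,j}))$, $s'_j=\Delta^s_j(k,s^*_j)$. $(r,m)\sim_i(r',m')$ iff $r_i(m)=r'_i(m')$; $K_i\phi$ holds iff $\phi$ holds at all $\sim_i$-related points. An indexical set $S$ assigns $S(r,m)\subseteq\mathrm{Agt}$ to each point; it is monotonically decreasing if $S(r,m)\subseteq S(r,m')$ whenever $m>m'$. $B^S_i\phi:=K_i(i\in S\Rightarrow\phi)$; $E^B_S\phi:=\bigwedge_{i\in S}B^S_i\phi$; $CB_S\phi:=\bigwedge_{k\ge1}(E^B_S)^k\phi$. $\exists v$ holds at $(r,m)$ iff some agent's initial preference in $r$ is $v$. The knowledge-based program $\mathbf{P}(\Phi)$ (for formulas $\Phi_{i,v}$) has agent $i$ do $\mathtt{noop}$ until some $v\in V$ satisfies $\Phi_{i,v}$, then perform $\mathtt{decide}_i(v)$ for the least such $v$, then $\mathtt{noop}$ forever. $P$ implements $\mathbf{P}(\Phi)$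 w.r.t. $\mathcal{E},\mathcal{F}$ if at every point $(r,m)$ of $\mathcal{I}_{P,\mathcal{E},\mathcal{F}}$ and every agent $i$, $P_i(r_i(m))$ is the action this program prescribes for $i$ at $(r,m)$, with $\Phi_{i,v}$ evaluated in $\mathcal{I}_{P,\mathcal{E},\mathcal{F}}$ (i.e. $\mathtt{noop}$ if $i$ performed a $\mathtt{decide}$ action at an earlier time in $r$; otherwise $\mathtt{decide}_i(v)$ for the least $v$ with $\Phi_{i,v}$ true at $(r,m)$ if one exists; otherwise $\mathtt{noop}$). SBA($S$) valid means in every run $r$: each agent performs a $\mathtt{decide}$ action at most once; if $i\in S(r,m)$ performs $\mathtt{decide}_i(v)$ at time $m$ then every $j\in S(r,m)$ performs $\mathtt{decide}_j(v)$ at time $m$; and if $i\in S(r,m)$ performs $\mathtt{decide}_i(v)$ at time $m$ then some agent has initial preference $v$. *)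

theory Defs
  imports Main
begin

text \<open>The action set A_i = {noop} + {decide_i(v) : v in V}; the agent index of a
decide action is implicit (it is the agent performing it).\<close>
datatype 'v act = Noop | Decide 'v

text \<open>All agents' local states live in one HOL type 'l, with L_i carved out as a set;
likewise all messages live in one type 'm (the union of the M_i).\<close>
record ('agt, 'l, 'm, 'v) info_exchange =
  Ls    :: "'agt \<Rightarrow> 'l set"
  Is    :: "'agt \<Rightarrow> 'l set"
  Ms    :: "'agt \<Rightarrow> 'm set"
  mu    :: "'agt \<Rightarrow> 'l \<Rightarrow> 'v act \<Rightarrow> 'agt \<Rightarrow> 'm"
  delta :: "'agt \<Rightarrow> 'l \<Rightarrow> 'v act \<Rightarrow> ('agt \<Rightarrow> 'm) \<Rightarrow> 'l"
  init  :: "'agt \<Rightarrow> 'l \<Rightarrow> 'v"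
  time  :: "'agt \<Rightarrow> 'l \<Rightarrow> nat"

definition is_info_exchange :: "'m \<Rightarrow> ('agt, 'l, 'm, 'v) info_exchange \<Rightarrow> bool" where
  "is_info_exchange botm E \<longleftrightarrow>
     (\<forall>i. Is E i \<subseteq> Ls E i) \<and>
     (\<forall>i. botm \<in> Ms E i) \<and>
     (\<forall>i s a j. s \<in> Ls E i \<longrightarrow> mu E i s a j \<in> Ms E i) \<and>
     (\<forall>i s a ms. s \<in> Ls E i \<longrightarrow> delta E i s a ms \<in> Ls E i) \<and>
     (\<forall>i s a ms. s \<in> Ls E i \<longrightarrow> init E i (delta E i s a ms) = init E i s) \<and>
     (\<forall>i s a ms. s \<in> Ls E i \<longrightarrow> time E i (delta E i s a ms) = Suc (time E i s))"

type_synonym ('agt, 'l, 'm) adversary =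
  "(nat \<Rightarrow> 'agt \<Rightarrow> 'agt \<Rightarrow> 'm \<Rightarrow> 'm) \<times> (nat \<Rightarrow> 'agt \<Rightarrow> 'agt \<Rightarrow> 'm \<Rightarrow> 'm)
   \<times> ('agt \<Rightarrow> nat \<Rightarrow> 'l \<Rightarrow> 'l)"

record ('agt, 'e, 'l, 'm, 'v) failure_model =
  Le     :: "'e set"
  Ie     :: "'e set"
  deltae :: "'e \<Rightarrow> ('agt \<Rightarrow> 'v act) \<Rightarrow> 'e"
  Adv    :: "('agt, 'l, 'm) adversary set"

definition is_failure_model ::
  "('agt, 'l, 'm, 'v) info_exchange \<Rightarrow> ('agt, 'e, 'l, 'm, 'v) failure_model \<Rightarrow> bool" where
  "is_failure_model E F \<longleftrightarrow>
     Ie F \<noteq> {} \<and> Ie F \<subseteq> Le F \<and>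
     (\<forall>s acts. s \<in> Le F \<longrightarrow> deltae F s acts \<in> Le F) \<and>
     Adv F \<noteq> {} \<and>
     (\<forall>(dt, dr, ds) \<in> Adv F. \<forall>i k s. s \<in> Ls E i \<longrightarrow>
         ds i k s \<in> Ls E i \<and> time E i (ds i k s) = time E i s)"

text \<open>A run r gives the environment state at each time, the (fixed) adversary
component of the environment state, and each agent's local state at each time.\<close>
type_synonym ('agt, 'e, 'l, 'm) run =
  "(nat \<Rightarrow> 'e) \<times> ('agt, 'l, 'm) adversary \<times> (nat \<Rightarrow> 'agt \<Rightarrow> 'l)"

definition renv :: "('agt, 'e, 'l, 'm) run \<Rightarrow> nat \<Rightarrow> 'e" where
  "renv r = fst r"
definition radv :: "('agt, 'e, 'l, 'm) run \<Rightarrow> ('agt, 'l, 'm) adversary" where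
  "radv r = fst (snd r)"
definition rloc :: "('agt, 'e, 'l, 'm) run \<Rightarrow> nat \<Rightarrow> 'agt \<Rightarrow> 'l" where
  "rloc r = snd (snd r)"

type_synonym ('agt, 'l, 'v) protocol = "'agt \<Rightarrow> 'l \<Rightarrow> 'v act"

definition runs ::
  "('agt, 'l, 'v) protocol \<Rightarrow> ('agt, 'l, 'm, 'v) info_exchange \<Rightarrow>
   ('agt, 'e, 'l, 'm, 'v) failure_model \<Rightarrow> ('agt, 'e, 'l, 'm) run set" where
  "runs P E F = {r.
     renv r 0 \<in> Ie F \<and> radv r \<in> Adv F \<and> (\<forall>i. rloc r 0 i \<in> Is E i) \<and>
     (\<forall>k. let (dt, dr, ds) = radv r;
              a = (\<lambda>i. P i (rloc r k i));
              msg = (\<lambda>i j. mu E i (rloc r k i) (a i) j);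
              msg' = (\<lambda>i j. dr k i j (dt k i j (msg i j)))
          in renv r (Suc k) = deltae F (renv r k) a \<and>
             (\<forall>j. rloc r (Suc k) j =
                    ds j k (delta E j (rloc r k j) (a j) (\<lambda>i. msg' i j))))}"

type_synonym ('agt, 'e, 'l, 'm) fml = "('agt, 'e, 'l, 'm) run \<Rightarrow> nat \<Rightarrow> bool"

type_synonym ('agt, 'e, 'l, 'm) indexical = "('agt, 'e, 'l, 'm) run \<Rightarrow> nat \<Rightarrow> 'agt set"

definition Kn :: "('agt, 'e, 'l, 'm) run set \<Rightarrow> 'agt \<Rightarrow> ('agt, 'e, 'l, 'm) fml \<Rightarrow> ('agt, 'e, 'l, 'm) fml" where
  "Kn R i \<phi> = (\<lambda>r m. \<forall>r' \<in> R. \<forall>m'. rloc r' m' i = rloc r m i \<longrightarrow> \<phi> r' m')"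

definition Bel :: "('agt, 'e, 'l, 'm) run set \<Rightarrow> ('agt, 'e, 'l, 'm) indexical \<Rightarrow> 'agt \<Rightarrow>
    ('agt, 'e, 'l, 'm) fml \<Rightarrow> ('agt, 'e, 'l, 'm) fml" where
  "Bel R S i \<phi> = Kn R i (\<lambda>r m. i \<in> S r m \<longrightarrow> \<phi> r m)"

definition EB :: "('agt, 'e, 'l, 'm) run set \<Rightarrow> ('agt, 'e, 'l, 'm) indexical \<Rightarrow>
    ('agt, 'e, 'l, 'm) fml \<Rightarrow> ('agt, 'e, 'l, 'm) fml" where
  "EB R S \<phi> = (\<lambda>r m. \<forall>i \<in> S r m. Bel R S i \<phi> r m)"

definition CB :: "('agt, 'e, 'l, 'm) run set \<Rightarrow> ('agt, 'e, 'l, 'm) indexical \<Rightarrow>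
    ('agt, 'e, 'l, 'm) fml \<Rightarrow> ('agt, 'e, 'l, 'm) fml" where
  "CB R S \<phi> = (\<lambda>r m. \<forall>k \<ge> 1. ((EB R S) ^^ k) \<phi> r m)"

definition ex_val :: "('agt, 'l, 'm, 'v) info_exchange \<Rightarrow> 'v \<Rightarrow> ('agt, 'e, 'l, 'm) fml" where
  "ex_val E v = (\<lambda>r m. \<exists>i. init E i (rloc r 0 i) = v)"

definition mono_decreasing :: "('agt, 'e, 'l, 'm) run set \<Rightarrow> ('agt, 'e, 'l, 'm) indexical \<Rightarrow> bool" where
  "mono_decreasing R S \<longleftrightarrow> (\<forall>r \<in> R. \<forall>m m'. m > m' \<longrightarrow> S r m \<subseteq> S r m')"

text \<open>Action prescribed by P(Phi) for agent i at point (r,m), given the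
protocol actually run (to know whether i decided earlier).\<close>
definition kbp_action :: "('agt, 'l, 'v) protocol \<Rightarrow> ('agt \<Rightarrow> 'v \<Rightarrow> ('agt, 'e, 'l, 'm) fml) \<Rightarrow>
    'agt \<Rightarrow> ('agt, 'e, 'l, 'm) run \<Rightarrow> nat \<Rightarrow> ('v::linorder) act" where
  "kbp_action P \<Phi> i r m =
     (if \<exists>m' < m. \<exists>v. P i (rloc r m' i) = Decide v then Noop
      else if \<exists>v. \<Phi> i v r m \<and> (\<forall>w. \<Phi> i w r m \<longrightarrow> v \<le> w)
        then Decide (LEAST v. \<Phi> i v r m)
        else Noop)"

definition implements ::
  "('agt, 'l, 'v::linorder) protocol \<Rightarrow> ('agt \<Rightarrow> 'v \<Rightarrow> ('agt, 'e, 'l, 'm) fml) \<Rightarrow>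
   ('agt, 'l, 'm, 'v) info_exchange \<Rightarrow> ('agt, 'e, 'l, 'm, 'v) failure_model \<Rightarrow> bool" where
  "implements P \<Phi> E F \<longleftrightarrow>
     (\<forall>r \<in> runs P E F. \<forall>m i. P i (rloc r m i) = kbp_action P \<Phi> i r m)"

definition SBA_valid ::
  "('agt, 'l, 'v) protocol \<Rightarrow> ('agt, 'l, 'm, 'v) info_exchange \<Rightarrow>
   ('agt, 'e, 'l, 'm, 'v) failure_model \<Rightarrow> ('agt, 'e, 'l, 'm) indexical \<Rightarrow> bool" where
  "SBA_valid P E F S \<longleftrightarrow>
     (\<forall>r \<in> runs P E F.
        (\<forall>i m m' v v'. P i (rloc r m i) = Decide v \<and> P i (rloc r m' i) = Decide v' \<longrightarrow> m = m') \<and>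
        (\<forall>i j m v. i \<in> S r m \<and> j \<in> S r m \<and> P i (rloc r m i) = Decide v \<longrightarrow>
                    P j (rloc r m j) = Decide v) \<and>
        (\<forall>i m v. i \<in> S r m \<and> P i (rloc r m i) = Decide v \<longrightarrow> ex_val E v r m))"

end

theory Submission
  imports Defs
begin

text \<open>Common belief is a fixed point: if one member of \<open>S\<close> believes \<open>CB\<^sub>S \<phi>\<close>, then
  \<open>CB\<^sub>S \<phi>\<close> holds, so every member of \<open>S\<close> believes it. Hence at each point all
  members of \<open>S\<close> have the same set of candidate values; it consists of initial
  preferences, so it is finite and all of them pick the same least value. Nobody in \<open>S\<close>
  can have decided earlier either: if \<open>j\<close> decided at \<open>m' < m\<close>, then \<open>i\<close> was in
  \<open>S\<close> at \<open>m'\<close> (as \<open>S\<close> decreases) and shared \<open>j\<close>'s reason to decide, so \<open>i\<close> would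
  have decided by time \<open>m'\<close> as well. Validity holds because belief is veridical for
  members of \<open>S\<close>.\<close>

lemma BelD:
  assumes "Bel R S i \<phi> r m" "r \<in> R" "i \<in> S r m"
  shows "\<phi> r m"
  using assms unfolding Bel_def Kn_def by auto

lemma CBD:
  assumes "CB R S \<phi> r m" "r \<in> R" "i \<in> S r m"
  shows "\<phi> r m"
proof -
  have "(EB R S ^^ 1) \<phi> r m"
    using assms(1) unfolding CB_def by blast
  then have "Bel R S i \<phi> r m"
    using assms(3) unfolding EB_def by simp
  then show ?thesis
    using assms(2,3) by (rule BelD)
qed

lemma CB_imp_Bel_CB:
  assumes "CB R S \<phi> r m" "j \<in> S r m"
  shows "Bel R S j (CB R S \<phi>) r m"
  unfolding Bel_def Kn_def CB_def
proof (intro ballI allI impI)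
  fix r' m' and k :: nat
  assume same_state: "rloc r' m' j = rloc r m j" and "r' \<in> R" "j \<in> S r' m'" "1 \<le> k"
  have "(EB R S ^^ Suc k) \<phi> r m"
    using assms(1) unfolding CB_def by (simp del: funpow.simps)
  then have "Bel R S j ((EB R S ^^ k) \<phi>) r m"
    using assms(2) unfolding EB_def by simp
  then show "(EB R S ^^ k) \<phi> r' m'"
    using same_state \<open>r' \<in> R\<close> \<open>j \<in> S r' m'\<close> unfolding Bel_def Kn_def by auto
qed

lemma Bel_CB_imp:
  assumes "Bel R S i (CB R S \<phi>) r m" "r \<in> R" "i \<in> S r m"
  shows "\<phi> r m"
  using CBD[OF BelD[OF assms] assms(2,3)] .

lemma Bel_CB_imp_Bel_CB:
  assumes "Bel R S i (CB R S \<phi>) r m" "r \<in> R" "i \<in> S r m" "j \<in> S r m"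
  shows "Bel R S j (CB R S \<phi>) r m"
  using CB_imp_Bel_CB[OF BelD[OF assms(1-3)] assms(4)] .

lemma finite_Bel_CB_ex_val:
  fixes S :: "('agt::finite, 'e, 'l, 'm) indexical"
  assumes "r \<in> R" "i \<in> S r m"
  shows "finite {v. Bel R S i (CB R S (ex_val E v)) r m}"
proof (rule finite_subset)
  show "{v. Bel R S i (CB R S (ex_val E v)) r m} \<subseteq> range (\<lambda>j. init E j (rloc r 0 j))"
    using assms unfolding ex_val_def by (blast dest: Bel_CB_imp)
qed simp

definition decided_before :: "('agt, 'l, 'v) protocol \<Rightarrow> 'agt \<Rightarrow> ('agt, 'e, 'l, 'm) run \<Rightarrow> nat \<Rightarrow> bool"
  where "decided_before P i r m \<longleftrightarrow> (\<exists>m' < m. \<exists>v. P i (rloc r m' i) = Decide v)"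

lemma kbp_action_eq_Decide_iff:
  "kbp_action P \<Phi> i r m = Decide v \<longleftrightarrow>
     \<not> decided_before P i r m \<and> \<Phi> i v r m \<and> (\<forall>w. \<Phi> i w r m \<longrightarrow> v \<le> w)"
proof -
  have "(LEAST v. \<Phi> i v r m) = u" if "\<Phi> i u r m" "\<forall>w. \<Phi> i w r m \<longrightarrow> u \<le> w" for u
    using that by (intro Least_equality) auto
  then show ?thesis
    unfolding kbp_action_def decided_before_def by (auto intro: order.antisym)
qed

lemma kbp_action_eq_Noop_imp_decided_before:
  assumes "kbp_action P \<Phi> i r m = Noop" "\<Phi> i v r m" "finite {w. \<Phi> i w r m}"
  shows "decided_before P i r m"
proof (rule ccontr)
  let ?C = "{w. \<Phi> i w r m}"
  assume "\<not> decided_before P i r m"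
  moreover have "Min ?C \<in> ?C" "\<forall>w \<in> ?C. Min ?C \<le> w"
    using assms(2,3) Min_in[of ?C] by auto
  ultimately have "kbp_action P \<Phi> i r m = Decide (Min ?C)"
    unfolding kbp_action_eq_Decide_iff by simp
  with assms(1) show False by simp
qed

lemma implements_Decide_iff:
  assumes "implements P \<Phi> E F" "r \<in> runs P E F"
  shows "P i (rloc r m i) = Decide v \<longleftrightarrow>
           \<not> decided_before P i r m \<and> \<Phi> i v r m \<and> (\<forall>w. \<Phi> i w r m \<longrightarrow> v \<le> w)"
  using assms kbp_action_eq_Decide_iff unfolding implements_def by metis

lemma implements_decides_at_most_once:
  assumes "implements P \<Phi> E F" "r \<in> runs P E F"
    and "P i (rloc r m i) = Decide v" "P i (rloc r m' i) = Decide v'"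
  shows "m = m'"
proof (rule ccontr)
  assume "m \<noteq> m'"
  then have "decided_before P i r m \<or> decided_before P i r m'"
    using assms(3,4) unfolding decided_before_def by (metis linorder_neq_iff)
  then show False
    using assms implements_Decide_iff by metis
qed

lemma implements_decided_by:
  assumes "implements P \<Phi> E F" "r \<in> runs P E F"
    and "\<Phi> i v r m" "finite {w. \<Phi> i w r m}"
  shows "\<exists>m' \<le> m. \<exists>v. P i (rloc r m' i) = Decide v"
proof (cases "P i (rloc r m i)")
  case Noop
  then have "kbp_action P \<Phi> i r m = Noop"
    using assms(1,2) unfolding implements_def by metis
  then have "decided_before P i r m"
    using assms(3,4) by (rule kbp_action_eq_Noop_imp_decided_before)
  then show ?thesis
    unfolding decided_before_def by (meson less_imp_le)
qed blast

lemma implements_simultaneous_decisions: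
  assumes impl: "implements P \<Phi> E F" and r: "r \<in> runs P E F"
    and mono: "mono_decreasing (runs P E F) S"
    and shared: "\<And>m i j v. i \<in> S r m \<Longrightarrow> j \<in> S r m \<Longrightarrow> \<Phi> i v r m \<Longrightarrow> \<Phi> j v r m"
    and fin: "\<And>m i. i \<in> S r m \<Longrightarrow> finite {v. \<Phi> i v r m}"
    and i: "i \<in> S r m" and j: "j \<in> S r m" and decide: "P i (rloc r m i) = Decide v"
  shows "P j (rloc r m j) = Decide v"
proof -
  have i_first: "\<not> decided_before P i r m" and "\<Phi> i v r m" and i_least: "\<forall>w. \<Phi> i w r m \<longrightarrow> v \<le> w"
    using decide implements_Decide_iff[OF impl r] by blast+
  have "\<not> decided_before P j r m"
  proof
    assume "decided_before P j r m"
    then obtain m' w where "m' < m" and j_decides: "P j (rloc r m' j) = Decide w"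
      unfolding decided_before_def by blast
    then have "i \<in> S r m'" "j \<in> S r m'"
      using mono r i j unfolding mono_decreasing_def by blast+
    moreover have "\<Phi> j w r m'"
      using j_decides implements_Decide_iff[OF impl r] by blast
    ultimately have "\<exists>m'' \<le> m'. \<exists>v. P i (rloc r m'' i) = Decide v"
      using implements_decided_by[OF impl r] shared fin by blast
    with \<open>m' < m\<close> i_first show False
      unfolding decided_before_def by auto
  qed
  moreover have "\<Phi> j v r m" "\<forall>w. \<Phi> j w r m \<longrightarrow> v \<le> w"
    using shared[OF i j] shared[OF j i] \<open>\<Phi> i v r m\<close> i_least by blast+
  ultimately show ?thesis
    using implements_Decide_iff[OF impl r] by blast
qed

theorem proposition8:
  fixes P :: "('agt::finite, 'l, 'v::linorder) protocol"
    and E :: "('agt, 'l, 'm, 'v) info_exchange"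
    and F :: "('agt, 'e, 'l, 'm, 'v) failure_model"
    and S :: "('agt, 'e, 'l, 'm) indexical"
    and botm :: 'm
  assumes "is_info_exchange botm E"
    and "is_failure_model E F"
    and "mono_decreasing (runs P E F) S"
    and "implements P (\<lambda>i v. Bel (runs P E F) S i (CB (runs P E F) S (ex_val E v))) E F"
  shows "SBA_valid P E F S"
  unfolding SBA_valid_def
proof (intro ballI conjI allI impI)
  let ?R = "runs P E F"
  fix r assume r: "r \<in> ?R"
  show "m = m'" if "P i (rloc r m i) = Decide v \<and> P i (rloc r m' i) = Decide v'" for i m m' v v'
    using implements_decides_at_most_once[OF assms(4) r] that by blast
  show "P j (rloc r m j) = Decide v"
    if "i \<in> S r m \<and> j \<in> S r m \<and> P i (rloc r m i) = Decide v" for i j m v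
    using implements_simultaneous_decisions[OF assms(4) r assms(3)]
      Bel_CB_imp_Bel_CB[OF _ r] finite_Bel_CB_ex_val[OF r] that by blast
  show "ex_val E v r m" if "i \<in> S r m \<and> P i (rloc r m i) = Decide v" for i m v
    using that implements_Decide_iff[OF assms(4) r] r by (blast dest: Bel_CB_imp)
qed

end
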